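(* Let $r\geq 3$ be an integer and let $x,y$ be distinct vertices of a graph $G$. If $G$ contains an $r$-compatible set of four $xy$-paths, then $G$ contains $C_{2,r}$ as an immersion.
   Context: All graphs are finite and loopless but may have parallel edges. An $xy$-path is a path with ends $x$ and $y$, written starting at $x$. Two edge-disjoint $xy$-paths $Q_1=x_1,\ldots,x_s$ and $Q_2=y_1,\ldots,y_t$ are aligned if for every two internal vertices $u=x_{i_1}=y_{j_1}$, $v=x_{i_2}=y_{j_2}$ common to both, $(i_1-i_2)(j_1-j_2)>0$. A set of pairwise edge-disjoint $xy$-paths is $r$-compatible if some two of the paths are aligned and intersect in at least $r$ vertices (counting $x$ and $y$). Lifting a pair of adjacent edges $uv,vw$ means deleting them and adding a new edge $uw$ (if $u=w$ the loop is deleted). A graph $H$ is an immersion of $G$ if a graph isomorphic to $H$ can be obtained from a subgraph of $G$ by repeatedly lifting pairs of edges; equivalently, there is an injective map $V(H)\to V(G)$ and pairwise edge-disjoint paths of $G$ joining the images of the ends of each edge of $H$. $C_{t,r}$ denotes the graph obtained from a cycle on $r$ vertices by replacing each edge by $t$ parallel edges. *)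

theory Defs
  imports Main
begin

text \<open>A finite loopless multigraph: vertex set V, edge set E, and each edge e
  has a two-element set of ends (parallel edges allowed).\<close>
definition multigraph :: "'v set \<Rightarrow> 'e set \<Rightarrow> ('e \<Rightarrow> 'v set) \<Rightarrow> bool" where
  "multigraph V E ends \<longleftrightarrow> finite V \<and> finite E \<and>
     (\<forall>e\<in>E. \<exists>u v. u \<in> V \<and> v \<in> V \<and> u \<noteq> v \<and> ends e = {u, v})"

definition is_path :: "'v set \<Rightarrow> 'e set \<Rightarrow> ('e \<Rightarrow> 'v set) \<Rightarrow> 'v list \<times> 'e list \<Rightarrow> bool" where
  "is_path V E ends P \<longleftrightarrow> fst P \<noteq> [] \<and> distinct (fst P) \<and>
     length (fst P) = length (snd P) + 1 \<and> set (fst P) \<subseteq> V \<and> set (snd P) \<subseteq> E \<and>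
     (\<forall>i < length (snd P). ends (snd P ! i) = {fst P ! i, fst P ! Suc i})"

definition xy_path :: "'v set \<Rightarrow> 'e set \<Rightarrow> ('e \<Rightarrow> 'v set) \<Rightarrow> 'v \<Rightarrow> 'v \<Rightarrow> 'v list \<times> 'e list \<Rightarrow> bool" where
  "xy_path V E ends x y P \<longleftrightarrow> is_path V E ends P \<and> hd (fst P) = x \<and> last (fst P) = y"

definition edge_disjoint :: "'v list \<times> 'e list \<Rightarrow> 'v list \<times> 'e list \<Rightarrow> bool" where
  "edge_disjoint P Q \<longleftrightarrow> set (snd P) \<inter> set (snd Q) = {}"

text \<open>Aligned: any two distinct internal vertices common to both paths occur in the
  same order on both (indices 0-based; internal means index strictly between 0 and s-1).\<close>
definition aligned :: "'v list \<times> 'e list \<Rightarrow> 'v list \<times> 'e list \<Rightarrow> bool" where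
  "aligned P Q \<longleftrightarrow>
     (\<forall>i1 i2 j1 j2.
        0 < i1 \<and> i1 < length (fst P) - 1 \<and> 0 < i2 \<and> i2 < length (fst P) - 1 \<and>
        0 < j1 \<and> j1 < length (fst Q) - 1 \<and> 0 < j2 \<and> j2 < length (fst Q) - 1 \<and>
        fst P ! i1 = fst Q ! j1 \<and> fst P ! i2 = fst Q ! j2 \<and> fst P ! i1 \<noteq> fst P ! i2
        \<longrightarrow> (int i1 - int i2) * (int j1 - int j2) > 0)"

text \<open>A set of pairwise edge-disjoint xy-paths is r-compatible if some two of the
  paths are aligned and share at least r vertices (x and y included).\<close>
definition r_compatible :: "'v set \<Rightarrow> 'e set \<Rightarrow> ('e \<Rightarrow> 'v set) \<Rightarrow> 'v \<Rightarrow> 'v \<Rightarrow> nat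
    \<Rightarrow> ('v list \<times> 'e list) set \<Rightarrow> bool" where
  "r_compatible V E ends x y r S \<longleftrightarrow>
     (\<forall>P\<in>S. xy_path V E ends x y P) \<and>
     (\<forall>P\<in>S. \<forall>Q\<in>S. P \<noteq> Q \<longrightarrow> edge_disjoint P Q) \<and>
     (\<exists>P\<in>S. \<exists>Q\<in>S. P \<noteq> Q \<and> aligned P Q \<and> card (set (fst P) \<inter> set (fst Q)) \<ge> r)"

definition immersion :: "'a set \<Rightarrow> 'b set \<Rightarrow> ('b \<Rightarrow> 'a set) \<Rightarrow>
    'v set \<Rightarrow> 'e set \<Rightarrow> ('e \<Rightarrow> 'v set) \<Rightarrow> bool" where
  "immersion VH EH endsH V E ends \<longleftrightarrow>
     (\<exists>\<phi> \<pi>. inj_on \<phi> VH \<and> \<phi> ` VH \<subseteq> V \<and>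
        (\<forall>e\<in>EH. \<exists>u v. endsH e = {u, v} \<and> xy_path V E ends (\<phi> u) (\<phi> v) (\<pi> e)) \<and>
        (\<forall>e\<in>EH. \<forall>e'\<in>EH. e \<noteq> e' \<longrightarrow> edge_disjoint (\<pi> e) (\<pi> e')))"

text \<open>C_{t,r}: cycle on vertices 0..r-1, each cycle edge replaced by t parallel edges
  (edge (i,k) joins i and (i+1) mod r).\<close>
definition C_V :: "nat \<Rightarrow> nat set" where "C_V r = {..<r}"
definition C_E :: "nat \<Rightarrow> nat \<Rightarrow> (nat \<times> nat) set" where "C_E t r = {..<r} \<times> {..<t}"
definition C_ends :: "nat \<Rightarrow> nat \<times> nat \<Rightarrow> nat set" where
  "C_ends r e = {fst e, Suc (fst e) mod r}"

end

theory Submission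
  imports Defs
begin

text \<open>Let P and Q be the two aligned paths sharing at least r vertices. Choose r common
  vertices, among them x and y. By alignment they occur in the same order on P and on Q, so
  consecutive chosen vertices are joined both by a segment of P and by an edge-disjoint segment
  of Q; this doubles the r - 1 edges of a path through the chosen vertices from x to y. The two
  remaining xy-paths of the set double the closing edge from y back to x.\<close>

definition subpath :: "'v list \<times> 'e list \<Rightarrow> nat \<Rightarrow> nat \<Rightarrow> 'v list \<times> 'e list" where
  "subpath P i j = (take (Suc (j - i)) (drop i (fst P)), take (j - i) (drop i (snd P)))"

lemma edge_disjoint_sym: "edge_disjoint P Q \<longleftrightarrow> edge_disjoint Q P"
  by (auto simp: edge_disjoint_def)

lemma edge_disjoint_mono:
  assumes "edge_disjoint P Q" "set (snd P') \<subseteq> set (snd P)" "set (snd Q') \<subseteq> set (snd Q)"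
  shows "edge_disjoint P' Q'"
  using assms by (auto simp: edge_disjoint_def)

lemma is_path_distinct_edges:
  assumes "is_path V E ends P"
  shows "distinct (snd P)"
proof -
  have "snd P ! i \<noteq> snd P ! j" if "i < j" "j < length (snd P)" for i j
  proof
    assume same: "snd P ! i = snd P ! j"
    have "ends (snd P ! i) = {fst P ! i, fst P ! Suc i}"
      "ends (snd P ! j) = {fst P ! j, fst P ! Suc j}"
      using assms that by (simp_all add: is_path_def)
    with same have "fst P ! i \<in> {fst P ! j, fst P ! Suc j}"
      by (metis insertI1)
    with assms that show False
      by (auto simp: is_path_def nth_eq_iff_index_eq)
  qed
  then show ?thesis
    by (metis distinct_conv_nth linorder_neq_iff)
qed

lemma xy_path_subpath:
  assumes "is_path V E ends P" "i \<le> j" "j < length (fst P)"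
  shows "xy_path V E ends (fst P ! i) (fst P ! j) (subpath P i j)"
proof -
  obtain ps es where P: "P = (ps, es)" by fastforce
  have "length ps = length es + 1" "set ps \<subseteq> V" "set es \<subseteq> E" "distinct ps"
    and edge_ends: "\<And>k. k < length es \<Longrightarrow> ends (es ! k) = {ps ! k, ps ! Suc k}"
    using assms(1) by (auto simp: is_path_def P)
  then have "is_path V E ends (take (Suc (j - i)) (drop i ps), take (j - i) (drop i es))"
    using assms(2,3) unfolding is_path_def P fst_conv snd_conv
    by (auto dest!: in_set_takeD in_set_dropD intro: edge_ends)
  moreover have "hd (take (Suc (j - i)) (drop i ps)) = ps ! i"
    and "last (take (Suc (j - i)) (drop i ps)) = ps ! j"
    using assms(2,3) by (simp_all add: P hd_drop_conv_nth last_conv_nth)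
  ultimately show ?thesis
    by (simp add: xy_path_def subpath_def P)
qed

lemma set_snd_subpath_subset: "set (snd (subpath P i j)) \<subseteq> set (snd P)"
  by (auto simp: subpath_def dest!: in_set_takeD in_set_dropD)

lemma set_snd_subpath_subset_nth:
  "set (snd (subpath P i j)) \<subseteq> (!) (snd P) ` ({i..<j} \<inter> {..<length (snd P)})"
proof
  fix e assume "e \<in> set (snd (subpath P i j))"
  then obtain k where "k < length (take (j - i) (drop i (snd P)))"
    "e = take (j - i) (drop i (snd P)) ! k"
    by (auto simp: subpath_def in_set_conv_nth)
  then show "e \<in> (!) (snd P) ` ({i..<j} \<inter> {..<length (snd P)})"
    by (intro image_eqI[of _ _ "i + k"]) auto
qed

lemma edge_disjoint_subpaths:
  assumes "is_path V E ends P" "j \<le> i'"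
  shows "edge_disjoint (subpath P i j) (subpath P i' j')"
proof -
  have "distinct (snd P)" using is_path_distinct_edges[OF assms(1)] .
  then have "(!) (snd P) ` ({i..<j} \<inter> {..<length (snd P)}) \<inter>
             (!) (snd P) ` ({i'..<j'} \<inter> {..<length (snd P)}) = {}"
    using assms(2) by (auto simp: nth_eq_iff_index_eq)
  then show ?thesis
    using set_snd_subpath_subset_nth[of P i j] set_snd_subpath_subset_nth[of P i' j']
    by (auto simp: edge_disjoint_def)
qed

lemma aligned_common_vertex_order:
  assumes "aligned (ps, es) (qs, fs)" "distinct ps" "distinct qs"
    and "ps \<noteq> []" "qs \<noteq> []" "hd ps = hd qs" "last ps = last qs"
    and "i < i'" "i' < length ps" "j < length qs" "j' < length qs"
    and "ps ! i = qs ! j" "ps ! i' = qs ! j'"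
  shows "j < j'"
proof -
  have first: "ps ! 0 = qs ! 0" and final: "ps ! (length ps - 1) = qs ! (length qs - 1)"
    using assms(4-7) by (simp_all add: hd_conv_nth last_conv_nth)
  have ne: "ps ! i \<noteq> ps ! i'"
    using assms(2,8,9) by (simp add: nth_eq_iff_index_eq)
  consider "i = 0" | "i' = length ps - 1" | "0 < i" "i' < length ps - 1"
    using assms(9) by linarith
  then show ?thesis
  proof cases
    case 1
    then have "j = 0" using first assms(3,5,10,12) by (simp add: nth_eq_iff_index_eq)
    with 1 ne assms(13) first show ?thesis by (cases j') auto
  next
    case 2
    then have "j' = length qs - 1" using final assms(3,5,11,13) by (simp add: nth_eq_iff_index_eq)
    with 2 ne assms(10,12) final show ?thesis by (cases "j = length qs - 1") auto
  next
    case 3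
    have "ps ! i \<noteq> ps ! 0" "ps ! i \<noteq> ps ! (length ps - 1)"
      "ps ! i' \<noteq> ps ! 0" "ps ! i' \<noteq> ps ! (length ps - 1)"
      using 3 assms(2,4,8,9) by (simp_all add: nth_eq_iff_index_eq)
    then have "j \<noteq> 0" "j \<noteq> length qs - 1" "j' \<noteq> 0" "j' \<noteq> length qs - 1"
      using first final assms(12,13) by metis+
    then have "0 < j" "j < length qs - 1" "0 < j'" "j' < length qs - 1"
      using assms(10,11) by auto
    then have "(int i - int i') * (int j - int j') > 0"
      using assms(1)[unfolded aligned_def fst_conv, rule_format, of i i' j j'] 3 ne assms(8,12,13)
      by simp
    with assms(8) show ?thesis
      by (simp add: zero_less_mult_iff)
  qed
qed

lemma obtain_increasing_indices:
  assumes "distinct ps" "2 \<le> r" "r \<le> card (set ps \<inter> A)"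
    and "hd ps \<in> A" "last ps \<in> A" "hd ps \<noteq> last ps"
  obtains a where "strict_mono_on {..<r} a" "a 0 = 0" "a (r - 1) = length ps - 1"
    "\<And>k. k < r \<Longrightarrow> a k < length ps \<and> ps ! a k \<in> A"
proof -
  define n where "n = length ps"
  define I where "I = {i. i < n \<and> ps ! i \<in> A}"
  have "ps \<noteq> []" using assms(2,3) by (cases ps) auto
  then have endpoints: "0 \<in> I" "n - 1 \<in> I" "0 \<noteq> n - 1"
    using assms(4-6) by (auto simp: I_def n_def hd_conv_nth last_conv_nth)
  have "(!) ps ` I = set ps \<inter> A"
    by (auto simp: I_def n_def in_set_conv_nth)
  moreover have "inj_on ((!) ps) I"
    using assms(1) by (auto simp: I_def n_def inj_on_def nth_eq_iff_index_eq)
  ultimately have "r \<le> card I" using assms(3) card_image by metis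
  then have "r - 2 \<le> card (I - {0, n - 1})"
    using endpoints by (simp add: card_Diff_subset)
  then obtain J where J: "J \<subseteq> I - {0, n - 1}" "card J = r - 2" "finite J"
    by (rule obtain_subset_with_card_n)
  define K where "K = insert 0 (insert (n - 1) J)"
  have K: "finite K" "card K = r" "K \<subseteq> I" "0 \<in> K" "n - 1 \<in> K"
    using J endpoints assms(2) by (auto simp: K_def card_insert_if)
  define L where "L = sorted_list_of_set K"
  have L: "sorted_wrt (<) L" "set L = K" "length L = r"
    using K by (simp_all add: L_def strict_sorted_list_of_set)
  then have less: "\<And>i j. i < j \<Longrightarrow> j < r \<Longrightarrow> L ! i < L ! j"
    using sorted_wrt_nth_less by blast
  then have le: "\<And>i j. i \<le> j \<Longrightarrow> j < r \<Longrightarrow> L ! i \<le> L ! j"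
    by (metis le_neq_implies_less less_imp_le order_refl)
  have memI: "\<And>k. k < r \<Longrightarrow> L ! k \<in> I"
    using L K(3) nth_mem by blast
  show thesis
  proof
    show "strict_mono_on {..<r} ((!) L)"
      by (auto intro: strict_mono_onI less)
    obtain i where "i < r" "L ! i = 0" using K(4) L by (metis in_set_conv_nth)
    then show "L ! 0 = 0" using le[of 0 i] by simp
    obtain j where "j < r" "L ! j = n - 1" using K(5) L by (metis in_set_conv_nth)
    then have "n - 1 \<le> L ! (r - 1)" using le[of j "r - 1"] by simp
    moreover have "L ! (r - 1) < n" using memI[of "r - 1"] assms(2) by (simp add: I_def)
    ultimately show "L ! (r - 1) = length ps - 1" by (simp add: n_def)
    show "\<And>k. k < r \<Longrightarrow> L ! k < length ps \<and> ps ! (L ! k) \<in> A"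
      using memI by (simp add: I_def n_def)
  qed
qed

context
  fixes V :: "'v set" and E :: "'e set" and ends :: "'e \<Rightarrow> 'v set"
    and P Q R R' :: "'v list \<times> 'e list" and r :: nat and a b :: "nat \<Rightarrow> nat"
  assumes P: "is_path V E ends P" and Q: "is_path V E ends Q" and PQ: "edge_disjoint P Q"
    and r: "2 \<le> r" and a: "strict_mono_on {..<r} a" and b: "strict_mono_on {..<r} b"
    and common: "\<And>k. k < r \<Longrightarrow>
      a k < length (fst P) \<and> b k < length (fst Q) \<and> fst P ! a k = fst Q ! b k"
    and R: "xy_path V E ends (fst P ! a 0) (fst P ! a (r - 1)) R"
    and R': "xy_path V E ends (fst P ! a 0) (fst P ! a (r - 1)) R'"
    and RR': "edge_disjoint R R'"
    and RPQ: "edge_disjoint R P" "edge_disjoint R Q" "edge_disjoint R' P" "edge_disjoint R' Q"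
begin

definition cycle_path :: "nat \<times> nat \<Rightarrow> 'v list \<times> 'e list" where
  "cycle_path e = (if fst e = r - 1 then if snd e = 0 then R else R'
      else if snd e = 0 then subpath P (a (fst e)) (a (Suc (fst e)))
      else subpath Q (b (fst e)) (b (Suc (fst e))))"

lemma cycle_path_closing:
  "cycle_path (r - 1, 0) = R" "t \<noteq> 0 \<Longrightarrow> cycle_path (r - 1, t) = R'"
  by (simp_all add: cycle_path_def)

lemma cycle_path_P: "k \<noteq> r - 1 \<Longrightarrow> cycle_path (k, 0) = subpath P (a k) (a (Suc k))"
  and cycle_path_Q:
    "k \<noteq> r - 1 \<Longrightarrow> t \<noteq> 0 \<Longrightarrow> cycle_path (k, t) = subpath Q (b k) (b (Suc k))"
  by (simp_all add: cycle_path_def)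

lemma cycle_indices_mono: "k \<le> l \<Longrightarrow> l < r \<Longrightarrow> a k \<le> a l \<and> b k \<le> b l"
  using strict_mono_on_less_eq[OF a, of k l] strict_mono_on_less_eq[OF b, of k l] by simp

lemma xy_path_cycle_path:
  assumes "k < r"
  shows "\<exists>u v. C_ends r (k, t) = {u, v} \<and>
    xy_path V E ends (fst P ! a u) (fst P ! a v) (cycle_path (k, t))"
proof (cases "k = r - 1")
  case True
  then have "C_ends r (k, t) = {0, r - 1}" using r by (auto simp: C_ends_def)
  moreover have "xy_path V E ends (fst P ! a 0) (fst P ! a (r - 1)) (cycle_path (k, t))"
    using True R R' cycle_path_closing by (cases "t = 0") simp_all
  ultimately show ?thesis by blast
next
  case False
  with assms have "Suc k < r" by simp
  then have "C_ends r (k, t) = {k, Suc k}" by (simp add: C_ends_def)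
  moreover have
    "xy_path V E ends (fst P ! a k) (fst P ! a (Suc k)) (subpath P (a k) (a (Suc k)))"
    using xy_path_subpath[OF P, of "a k" "a (Suc k)"] cycle_indices_mono[of k "Suc k"]
      common[of "Suc k"] \<open>Suc k < r\<close> by simp
  moreover have
    "xy_path V E ends (fst P ! a k) (fst P ! a (Suc k)) (subpath Q (b k) (b (Suc k)))"
    using xy_path_subpath[OF Q, of "b k" "b (Suc k)"] cycle_indices_mono[of k "Suc k"]
      common[of k] common[of "Suc k"] \<open>Suc k < r\<close> by simp
  ultimately show ?thesis
    using False cycle_path_P cycle_path_Q by (cases "t = 0") auto
qed

lemma set_snd_cycle_path_P:
    "k \<noteq> r - 1 \<Longrightarrow> set (snd (cycle_path (k, 0))) \<subseteq> set (snd P)"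
  and set_snd_cycle_path_Q:
    "k \<noteq> r - 1 \<Longrightarrow> t \<noteq> 0 \<Longrightarrow> set (snd (cycle_path (k, t))) \<subseteq> set (snd Q)"
  using cycle_path_P cycle_path_Q set_snd_subpath_subset[of P] set_snd_subpath_subset[of Q]
  by simp_all

lemma edge_disjoint_cycle_path_closing:
  assumes "k \<noteq> r - 1"
  shows "edge_disjoint (cycle_path (r - 1, t')) (cycle_path (k, t))"
proof -
  have "cycle_path (r - 1, t') = R \<or> cycle_path (r - 1, t') = R'"
    using cycle_path_closing by (cases "t' = 0") auto
  then show ?thesis
    using assms RPQ set_snd_cycle_path_P[of k] set_snd_cycle_path_Q[of k t]
    by (cases "t = 0") (auto intro: edge_disjoint_mono)
qed

lemma edge_disjoint_cycle_path_rungs: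
  assumes "k \<noteq> r - 1" "k' \<noteq> r - 1" "k' < r" "t < 2" "t' < 2" "k < k' \<or> k = k' \<and> t < t'"
  shows "edge_disjoint (cycle_path (k, t)) (cycle_path (k', t'))"
proof (cases "t = t'")
  case True
  with assms have "Suc k \<le> k'" by auto
  then have "a (Suc k) \<le> a k'" "b (Suc k) \<le> b k'"
    using cycle_indices_mono \<open>k' < r\<close> by simp_all
  then show ?thesis
    using assms(1,2) True cycle_path_P cycle_path_Q
      edge_disjoint_subpaths[OF P] edge_disjoint_subpaths[OF Q]
    by (cases "t = 0") simp_all
next
  case False
  with assms have "t = 0 \<and> t' \<noteq> 0 \<or> t \<noteq> 0 \<and> t' = 0" by auto
  then show ?thesis
  proof
    assume "t = 0 \<and> t' \<noteq> 0"
    then show ?thesis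
      using edge_disjoint_mono[OF PQ set_snd_cycle_path_P[OF assms(1)]
          set_snd_cycle_path_Q[OF assms(2)]] by simp
  next
    assume "t \<noteq> 0 \<and> t' = 0"
    then show ?thesis
      using edge_disjoint_mono[OF PQ set_snd_cycle_path_P[OF assms(2)]
          set_snd_cycle_path_Q[OF assms(1)]] by (simp add: edge_disjoint_sym)
  qed
qed

lemma edge_disjoint_cycle_path:
  assumes "k < r" "k' < r" "t < 2" "t' < 2" "(k, t) \<noteq> (k', t')"
  shows "edge_disjoint (cycle_path (k, t)) (cycle_path (k', t'))"
proof -
  have ordered: "edge_disjoint (cycle_path (k, t)) (cycle_path (k', t'))"
    if "k' < r" "t < 2" "t' < 2" "k < k' \<or> k = k' \<and> t < t'" for k t k' t'
  proof (cases "k' = r - 1")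
    case True
    show ?thesis
    proof (cases "k = r - 1")
      case True
      with \<open>k' = r - 1\<close> that have "k = r - 1" "k' = r - 1" "t = 0" "t' \<noteq> 0" by auto
      with RR' cycle_path_closing show ?thesis by simp
    next
      case False
      with True show ?thesis
        using edge_disjoint_cycle_path_closing by (simp add: edge_disjoint_sym)
    qed
  next
    case False
    with that show ?thesis
      by (intro edge_disjoint_cycle_path_rungs) auto
  qed
  from assms ordered[of k' t t' k] ordered[of k t' t k'] show ?thesis
    by (auto simp: edge_disjoint_sym dest: linorder_neqE_nat)
qed

lemma immersion_double_cycle: "immersion (C_V r) (C_E 2 r) (C_ends r) V E ends"
  unfolding immersion_def
proof (intro exI[of _ "\<lambda>k. fst P ! a k"] exI[of _ cycle_path] conjI ballI impI)
  have "distinct (fst P)" "set (fst P) \<subseteq> V" using P by (auto simp: is_path_def)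
  show "inj_on (\<lambda>k. fst P ! a k) (C_V r)"
  proof (rule inj_onI)
    fix k l assume kl: "k \<in> C_V r" "l \<in> C_V r" "fst P ! a k = fst P ! a l"
    then have "a k < length (fst P)" "a l < length (fst P)"
      using common by (simp_all add: C_V_def)
    with kl \<open>distinct (fst P)\<close> have "a k = a l"
      by (simp add: nth_eq_iff_index_eq)
    with kl show "k = l"
      using strict_mono_on_eq[OF a] by (simp add: C_V_def)
  qed
  show "(\<lambda>k. fst P ! a k) ` C_V r \<subseteq> V"
  proof
    fix v assume "v \<in> (\<lambda>k. fst P ! a k) ` C_V r"
    then obtain k where "k < r" "v = fst P ! a k" by (auto simp: C_V_def)
    with common[of k] \<open>set (fst P) \<subseteq> V\<close> show "v \<in> V" by (metis nth_mem subsetD)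
  qed
next
  fix e assume "e \<in> C_E 2 r"
  then show "\<exists>u v. C_ends r e = {u, v} \<and>
      xy_path V E ends (fst P ! a u) (fst P ! a v) (cycle_path e)"
    using xy_path_cycle_path[of "fst e" "snd e"] by (cases e) (simp add: C_E_def)
next
  fix e e' assume "e \<in> C_E 2 r" "e' \<in> C_E 2 r" "e \<noteq> e'"
  then show "edge_disjoint (cycle_path e) (cycle_path e')"
    using edge_disjoint_cycle_path by (cases e, cases e') (simp add: C_E_def)
qed

end

lemma aligned_xy_paths_common_indices:
  assumes P: "xy_path V E ends x y (ps, es)" and Q: "xy_path V E ends x y (qs, fs)"
    and "x \<noteq> y" and aligned: "aligned (ps, es) (qs, fs)"
    and "2 \<le> r" and many: "r \<le> card (set ps \<inter> set qs)"
  obtains a b where "strict_mono_on {..<r} a" "strict_mono_on {..<r} b"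
    "ps ! a 0 = x" "ps ! a (r - 1) = y"
    "\<And>k. k < r \<Longrightarrow> a k < length ps \<and> b k < length qs \<and> ps ! a k = qs ! b k"
proof -
  have "distinct ps" "distinct qs" "ps \<noteq> []" "qs \<noteq> []"
    and ends: "hd ps = x" "last ps = y" "hd qs = x" "last qs = y"
    using P Q by (auto simp: xy_path_def is_path_def)
  then have "hd ps \<in> set qs" "last ps \<in> set qs" "hd ps \<noteq> last ps"
    using \<open>x \<noteq> y\<close> by (metis hd_in_set last_in_set)+
  then obtain a where a: "strict_mono_on {..<r} a" "a 0 = 0" "a (r - 1) = length ps - 1"
    and a_common: "\<And>k. k < r \<Longrightarrow> a k < length ps \<and> ps ! a k \<in> set qs"
    using obtain_increasing_indices[OF \<open>distinct ps\<close> \<open>2 \<le> r\<close> many] by blast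
  have "\<exists>j. j < length qs \<and> qs ! j = ps ! a k" if "k < r" for k
    using a_common[OF that] by (simp add: in_set_conv_nth)
  then obtain b where b: "\<And>k. k < r \<Longrightarrow> b k < length qs \<and> qs ! b k = ps ! a k"
    by metis
  have "hd ps = hd qs" "last ps = last qs" using ends by simp_all
  note order = aligned_common_vertex_order[OF aligned \<open>distinct ps\<close> \<open>distinct qs\<close>
      \<open>ps \<noteq> []\<close> \<open>qs \<noteq> []\<close> this]
  have "strict_mono_on {..<r} b"
  proof (rule strict_mono_onI)
    fix k l :: nat assume kl: "k \<in> {..<r}" "l \<in> {..<r}" "k < l"
    then have "a k < a l" by (rule strict_mono_onD[OF a(1)])
    moreover have "a l < length ps" "b k < length qs" "b l < length qs"
      "ps ! a k = qs ! b k" "ps ! a l = qs ! b l"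
      using kl a_common b by simp_all
    ultimately show "b k < b l" by (rule order)
  qed
  moreover have "ps ! a 0 = x" "ps ! a (r - 1) = y"
    using a ends \<open>ps \<noteq> []\<close> by (simp_all add: hd_conv_nth last_conv_nth)
  ultimately show thesis
    using that[OF a(1)] a_common b by simp
qed

theorem mainTheorem13:
  fixes V :: "'v set" and E :: "'e set" and ends :: "'e \<Rightarrow> 'v set"
    and x y :: 'v and r :: nat and S :: "('v list \<times> 'e list) set"
  assumes "multigraph V E ends"
    and "r \<ge> 3"
    and "x \<in> V" and "y \<in> V" and "x \<noteq> y"
    and "card S = 4"
    and "r_compatible V E ends x y r S"
  shows "immersion (C_V r) (C_E 2 r) (C_ends r) V E ends"
proof -
  note compatible = assms(7)[unfolded r_compatible_def]
  have paths: "\<And>T. T \<in> S \<Longrightarrow> xy_path V E ends x y T"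
    and disjoint: "\<And>T T'. T \<in> S \<Longrightarrow> T' \<in> S \<Longrightarrow> T \<noteq> T' \<Longrightarrow> edge_disjoint T T'"
    using compatible by blast+
  obtain ps es qs fs where P: "(ps, es) \<in> S" and Q: "(qs, fs) \<in> S" "(ps, es) \<noteq> (qs, fs)"
    and aligned: "aligned (ps, es) (qs, fs)" and many: "r \<le> card (set ps \<inter> set qs)"
    using compatible by (metis prod.collapse)
  have "card (S - {(ps, es), (qs, fs)}) = 2"
    using P Q assms(6) by (simp add: card_Diff_subset)
  then obtain R R' where RR': "S - {(ps, es), (qs, fs)} = {R, R'}" "R \<noteq> R'"
    by (auto simp: card_2_iff)
  have "2 \<le> r" using assms(2) by simp
  then obtain a b where "strict_mono_on {..<r} a" "strict_mono_on {..<r} b"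
    "ps ! a 0 = x" "ps ! a (r - 1) = y"
    "\<And>k. k < r \<Longrightarrow> a k < length ps \<and> b k < length qs \<and> ps ! a k = qs ! b k"
    using aligned_xy_paths_common_indices[OF paths[OF P] paths[OF Q(1)] assms(5) aligned _ many]
    by blast
  moreover have "R \<in> S" "R' \<in> S" "R \<notin> {(ps, es), (qs, fs)}" "R' \<notin> {(ps, es), (qs, fs)}"
    using RR' by blast+
  ultimately show ?thesis
    using immersion_double_cycle[of V E ends "(ps, es)" "(qs, fs)" r a b R R']
      paths disjoint P Q RR'(2) \<open>2 \<le> r\<close> by (simp add: xy_path_def edge_disjoint_sym)
qed

end
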